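(* Let $N$ be a positive integer, $x\in\mathbb{T}$ irrational, and $D=\{x,2x,\dots,Nx\}$. Then $\mathrm{Md}_{\mathbb{T}}(D)\le 1/(N+1)$, and there is no Borel set $A\subset\mathbb{T}$ with $(A-A)\cap D=\emptyset$ and $\mu(A)=1/(N+1)$.
   Context: $\mathbb{T}=\mathbb{R}/\mathbb{Z}$ with Haar probability measure $\mu$; "$x$ irrational" means $x\notin\mathbb{Q}/\mathbb{Z}$. $\mathrm{Md}_{\mathbb{T}}(D)=\sup\{\mu(A): A\subset\mathbb{T}\text{ Borel},\ (A-A)\cap D=\emptyset\}$. *)

theory Defs
  imports "HOL-Analysis.Analysis"
begin

text \<open>The circle group T = R/Z is modelled by its fundamental domain [0,1):
  a point of T is represented by its unique representative in [0,1), the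
  quotient map is frac, subtraction in T is frac (a - b), and the Haar
  probability measure is Lebesgue measure restricted to [0,1).\<close>

definition circ_diff_set :: "real set \<Rightarrow> real set" where
  "circ_diff_set A = {frac (a - b) | a b. a \<in> A \<and> b \<in> A}"

definition circ_avoiding :: "real set \<Rightarrow> real set \<Rightarrow> bool" where
  "circ_avoiding D A \<longleftrightarrow> A \<in> sets borel \<and> A \<subseteq> {0..<1} \<and> circ_diff_set A \<inter> D = {}"

definition Md_T :: "real set \<Rightarrow> real" where
  "Md_T D = Sup {measure lborel A | A. circ_avoiding D A}"

end

theory Submission
  imports Defs
begin

text \<open>If A avoids D, the translates A, A + x, ..., A + Nx are pairwise disjoint: a common
  point of A + ix and A + jx with i < j would put (j - i)x into A - A. Hence (N + 1) \<mu>(A) \<le> 1.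
  If equality held, these translates would cover T up to a null set, and A + (N + 1)x, being
  disjoint from A + x, ..., A + Nx, would coincide with A up to a null set. As (N + 1)x is
  irrational and irrational rotations are ergodic, \<mu>(A) \<in> {0, 1}, contradicting
  \<mu>(A) = 1/(N + 1).

  Ergodicity: the measure d(c) of the symmetric difference of A and A + c is subadditive,
  small for small c by regularity of Lebesgue measure, and zero at every multiple of the
  irrational \<alpha>; by density of the multiples of \<alpha> modulo 1 it vanishes everywhere. So \<mu>(A \<inter> (A + c)) = \<mu>(A) for all c,
  and integrating over c with Fubini gives \<mu>(A)^2 = \<mu>(A).\<close>

lemma borel_measurable_frac [measurable]: "(frac :: real \<Rightarrow> real) \<in> borel_measurable borel"
  unfolding frac_def by measurable

lemma frac_frac_diff_left: "frac (frac p - q) = frac (p - q)"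
  by (metis diff_conv_add_uminus frac_add_simps(1))

lemma frac_diff_unit_interval:
  fixes x y :: real
  assumes "x \<in> {0..<1}" "y \<in> {0..<1}"
  shows "frac (y - x) = (if x \<le> y then y - x else y - (x - 1))"
  using assms frac_diff_pos[of x y] frac_diff_neg[of y x] by auto

lemma emeasure_subset_unit_interval_finite:
  "X \<subseteq> {0..<1::real} \<Longrightarrow> emeasure lborel X \<noteq> top"
  using emeasure_mono[of X "{0..<1::real}" lborel] by (auto simp: top_unique)

lemma fmeasurable_subset_unit_interval:
  "X \<in> sets borel \<Longrightarrow> X \<subseteq> {0..<1::real} \<Longrightarrow> X \<in> fmeasurable lborel"
  using emeasure_subset_unit_interval_finite by (auto simp: fmeasurable_def less_top)

lemma measure_subset_unit_interval_le_1:
  "X \<in> sets borel \<Longrightarrow> X \<subseteq> {0..<1::real} \<Longrightarrow> measure lborel X \<le> 1"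
  using measure_mono_fmeasurable[of X "{0..<1::real}" lborel] by (auto simp: fmeasurable_def)

lemma measure_sym_diff_eq_0:
  fixes X Y :: "real set"
  assumes X: "X \<in> sets borel" "X \<subseteq> {0..<1}" and Y: "Y \<in> sets borel" "Y \<subseteq> {0..<1}"
    and eq: "measure lborel X = measure lborel Y" and null: "measure lborel (Y - X) = 0"
  shows "measure lborel (sym_diff X Y) = 0"
proof -
  have split: "measure lborel S = measure lborel (S \<inter> T) + measure lborel (S - T)"
    if "S \<in> sets borel" "T \<in> sets borel" "S \<subseteq> {0..<1}" for S T :: "real set"
  proof -
    have "measure lborel ((S \<inter> T) \<union> (S - T)) = measure lborel (S \<inter> T) + measure lborel (S - T)"
      using that emeasure_subset_unit_interval_finite[of "S \<inter> T"] emeasure_subset_unit_interval_finite[of "S - T"]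
      by (intro measure_Union) auto
    moreover have "(S \<inter> T) \<union> (S - T) = S"
      by auto
    ultimately show ?thesis
      by simp
  qed
  have "measure lborel (X - Y) = 0"
    using split[OF X(1) Y(1) X(2)] split[OF Y(1) X(1) Y(2)] eq null by (simp add: Int_commute)
  then have "measure lborel (sym_diff X Y) \<le> 0"
    using measure_Un_le[of "X - Y" lborel "Y - X"] X Y null by auto
  then show ?thesis
    by (simp add: measure_le_0_iff)
qed

lemma emeasure_lborel_translate:
  "S \<in> sets borel \<Longrightarrow> emeasure lborel {y. y - c \<in> S} = emeasure lborel (S :: real set)"
  by (subst (2) lborel_distr_plus[symmetric, of "- c"]) (simp add: emeasure_distr vimage_def)

definition circ_translate :: "real \<Rightarrow> real set \<Rightarrow> real set" where
  "circ_translate c A = {y \<in> {0..<1}. frac (y - c) \<in> A}"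

lemma sets_circ_translate [measurable]:
  assumes "A \<in> sets borel"
  shows "circ_translate c A \<in> sets borel"
proof -
  have "{y. frac (y - c) \<in> A} \<in> sets borel"
    using assms by measurable
  then show ?thesis
    unfolding circ_translate_def by (simp add: Collect_conj_eq)
qed

lemma circ_translate_subset: "circ_translate c A \<subseteq> {0..<1}"
  by (auto simp: circ_translate_def)

lemma circ_translate_0: "A \<subseteq> {0..<1} \<Longrightarrow> circ_translate 0 A = A"
  by (auto simp: circ_translate_def)

lemma circ_translate_circ_translate:
  "circ_translate c (circ_translate c' A) = circ_translate (c + c') A"
  by (auto simp: circ_translate_def frac_frac_diff_left frac_lt_1 diff_diff_eq)

lemma circ_translate_add_of_int: "circ_translate (c + of_int k) A = circ_translate c A"
proof -
  have "y - (c + of_int k) = (y - c) + of_int (- k)" for y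
    by simp
  then show ?thesis
    unfolding circ_translate_def by (metis frac_add_of_int_right)
qed

lemma circ_translate_Diff: "circ_translate c (X - Y) = circ_translate c X - circ_translate c Y"
  by (auto simp: circ_translate_def)

lemma circ_translate_Un: "circ_translate c (X \<union> Y) = circ_translate c X \<union> circ_translate c Y"
  by (auto simp: circ_translate_def)

lemma emeasure_circ_translate:
  assumes A: "A \<in> sets borel" "A \<subseteq> {0..<1}"
  shows "emeasure lborel (circ_translate c A) = emeasure lborel A"
proof -
  define f where "f = frac c"
  have f: "f \<in> {0..<1}"
    by (auto simp: f_def frac_lt_1)
  have "c = f + of_int \<lfloor>c\<rfloor>"
    by (simp add: f_def frac_def)
  then have "circ_translate c A = circ_translate f A"
    by (metis circ_translate_add_of_int)
  also have "\<dots> = {y. y - f \<in> A \<inter> {0..<1 - f}} \<union> {y. y - (f - 1) \<in> A \<inter> {1 - f..<1}}"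
    unfolding circ_translate_def using f A(2) frac_diff_unit_interval[OF f] by (auto split: if_splits)
  finally have "emeasure lborel (circ_translate c A) =
      emeasure lborel {y. y - f \<in> A \<inter> {0..<1 - f}} + emeasure lborel {y. y - (f - 1) \<in> A \<inter> {1 - f..<1}}"
    using A(1) by (simp only:) (rule plus_emeasure[symmetric]; auto)
  also have "\<dots> = emeasure lborel (A \<inter> {0..<1 - f}) + emeasure lborel (A \<inter> {1 - f..<1})"
    using A(1) by (simp only: emeasure_lborel_translate sets.Int atLeastLessThan_borel)
  also have "\<dots> = emeasure lborel ((A \<inter> {0..<1 - f}) \<union> (A \<inter> {1 - f..<1}))"
    using A(1) by (intro plus_emeasure) auto
  also have "(A \<inter> {0..<1 - f}) \<union> (A \<inter> {1 - f..<1}) = A"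
    using A(2) by auto
  finally show ?thesis .
qed

lemma measure_circ_translate:
  "A \<in> sets borel \<Longrightarrow> A \<subseteq> {0..<1} \<Longrightarrow> measure lborel (circ_translate c A) = measure lborel A"
  by (simp add: measure_def emeasure_circ_translate)

definition translate_defect :: "real set \<Rightarrow> real \<Rightarrow> real" where
  "translate_defect A c = measure lborel (sym_diff A (circ_translate c A))"

lemma translate_defect_add_le:
  assumes A: "A \<in> sets borel" "A \<subseteq> {0..<1}"
  shows "translate_defect A (c + c') \<le> translate_defect A c + translate_defect A c'"
proof -
  define S where "S = sym_diff A (circ_translate c A)"
  define S' where "S' = sym_diff A (circ_translate c' A)"
  have S: "S \<in> sets borel" "S' \<in> sets borel" "S' \<subseteq> {0..<1}"
    using A circ_translate_subset by (auto simp: S_def S'_def)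
  have "circ_translate c S' = sym_diff (circ_translate c A) (circ_translate (c + c') A)"
    by (simp add: S'_def circ_translate_Un circ_translate_Diff circ_translate_circ_translate)
  then have "sym_diff A (circ_translate (c + c') A) \<subseteq> S \<union> circ_translate c S'"
    by (auto simp: S_def)
  then have "translate_defect A (c + c') \<le> measure lborel (S \<union> circ_translate c S')"
    unfolding translate_defect_def using A S
    by (intro measure_mono_fmeasurable fmeasurable_subset_unit_interval)
      (auto simp: S_def intro: circ_translate_subset[THEN subsetD])
  also have "\<dots> \<le> measure lborel S + measure lborel (circ_translate c S')"
    using S by (intro measure_Un_le) auto
  also have "measure lborel (circ_translate c S') = measure lborel S'"
    using S by (simp add: measure_circ_translate)
  finally show ?thesis
    by (simp add: translate_defect_def S_def S'_def)
qed

lemma translate_defect_of_nat_mult: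
  assumes A: "A \<in> sets borel" "A \<subseteq> {0..<1}" and "translate_defect A \<alpha> = 0"
  shows "translate_defect A (real k * \<alpha>) = 0"
proof (induction k)
  case 0
  then show ?case
    by (simp add: translate_defect_def circ_translate_0[OF A(2)])
next
  case (Suc k)
  have "translate_defect A (real (Suc k) * \<alpha>) \<le> translate_defect A (real k * \<alpha>) + translate_defect A \<alpha>"
    using translate_defect_add_le[OF A] by (simp add: algebra_simps)
  then show ?case
    using Suc assms(3) measure_nonneg by (simp add: translate_defect_def measure_le_0_iff)
qed

lemma measure_lebesgue_less_of_emeasure_less:
  assumes "S \<in> lmeasurable" "emeasure lebesgue S < ennreal e"
  shows "measure lebesgue S < e"
  using assms(2) unfolding emeasure_eq_measure2[OF assms(1)] by (simp add: ennreal_less_iff)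

lemma measure_Un_translates_le:
  fixes P Q :: "real set"
  assumes "P \<in> lmeasurable" "Q \<in> lmeasurable"
  shows "measure lebesgue (P \<union> (+) t ` Q \<union> (+) t ` P \<union> Q) \<le>
    2 * measure lebesgue P + 2 * measure lebesgue Q"
proof -
  have sets: "P \<in> sets lebesgue" "Q \<in> sets lebesgue" "(+) t ` Q \<in> sets lebesgue" "(+) t ` P \<in> sets lebesgue"
    using assms measurable_translation by (auto simp: fmeasurable_def)
  show ?thesis
    using measure_Un_le[OF sets.Un[OF sets.Un[OF sets(1,3)] sets(4)] sets(2)]
      measure_Un_le[OF sets.Un[OF sets(1,3)] sets(4)] measure_Un_le[OF sets(1,3)]
    by (simp add: measure_translation)
qed

text \<open>E is a bounded piece of the periodic extension of A. If V contains the
  \<eta>-neighbourhood of K, a translation by less than \<eta> moves points into or out of A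
  only through the gaps E - K and V - E.\<close>

lemma sym_diff_circ_translate_subset:
  fixes A E K V :: "real set"
  assumes A: "A \<subseteq> {0..<1}" and E: "E = {y. frac y \<in> A} \<inter> {-1..2}"
    and nbhd: "\<And>u v. u \<in> K \<Longrightarrow> dist u v < \<eta> \<Longrightarrow> v \<in> V"
    and t: "\<bar>t\<bar> < \<eta>" "\<bar>t\<bar> < 1"
  shows "sym_diff A (circ_translate t A) \<subseteq> (E - K) \<union> (+) t ` (V - E) \<union> (+) t ` (E - K) \<union> (V - E)"
proof
  fix y assume y: "y \<in> sym_diff A (circ_translate t A)"
  then have "y \<in> {0..<1}"
    using A circ_translate_subset by blast
  then have yE: "y \<in> E \<longleftrightarrow> y \<in> A" and ytE: "y - t \<in> E \<longleftrightarrow> y \<in> circ_translate t A"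
    using E t by (auto simp: circ_translate_def)
  have shift: "y \<in> (+) t ` S" if "y - t \<in> S" for S
    using that by (intro image_eqI[of _ _ "y - t"]) auto
  have dist: "dist y (y - t) < \<eta>" "dist (y - t) y < \<eta>"
    using t by (auto simp: dist_real_def)
  show "y \<in> (E - K) \<union> (+) t ` (V - E) \<union> (+) t ` (E - K) \<union> (V - E)"
  proof (cases "y \<in> A")
    case True
    then have "y \<in> E" "y - t \<notin> E"
      using y yE ytE by auto
    then show ?thesis
      using nbhd[OF _ dist(1)] shift[of "V - E"] by blast
  next
    case False
    then have "y \<notin> E" "y - t \<in> E"
      using y yE ytE by auto
    then show ?thesis
      using nbhd[OF _ dist(2)] shift[of "E - K"] by blast
  qed
qed

lemma translate_defect_small:
  assumes A: "A \<in> sets borel" "A \<subseteq> {0..<1}" and "e > 0"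
  obtains \<delta> where "\<delta> > 0" "\<And>t. \<bar>t\<bar> < \<delta> \<Longrightarrow> translate_defect A t \<le> e"
proof -
  define E where "E = {y. frac y \<in> A} \<inter> {-1..2}"
  have "E \<in> sets borel"
    using A(1) unfolding E_def by measurable
  then have "E \<in> sets lebesgue"
    by simp
  then obtain K V where K: "closed K" "K \<subseteq> E" "E - K \<in> lmeasurable" "measure lebesgue (E - K) < e / 4"
    and V: "open V" "E \<subseteq> V" "V - E \<in> lmeasurable" "measure lebesgue (V - E) < e / 4"
    using sets_lebesgue_inner_closed[of E "e / 4"] sets_lebesgue_outer_open[of E "e / 4"] \<open>e > 0\<close>
    by (metis measure_lebesgue_less_of_emeasure_less divide_pos_pos zero_less_numeral)
  have "compact K"
    using K(1,2) bounded_subset[OF bounded_closed_interval, of K "-1" 2]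
    by (auto simp: E_def compact_eq_bounded_closed)
  then obtain \<eta> where "\<eta> > 0" and \<eta>: "(\<Union>u\<in>K. ball u \<eta>) \<subseteq> V"
    using compact_subset_open_imp_ball_epsilon_subset[OF _ V(1)] K(2) V(2) by (metis order.trans)
  show ?thesis
  proof (rule that[of "min \<eta> 1"])
    show "min \<eta> 1 > 0"
      using \<open>\<eta> > 0\<close> by simp
    fix t :: real assume t: "\<bar>t\<bar> < min \<eta> 1"
    define W where "W = (E - K) \<union> (+) t ` (V - E) \<union> (+) t ` (E - K) \<union> (V - E)"
    have W: "W \<in> lmeasurable"
      unfolding W_def using K(3) V(3) by (intro fmeasurable.Un measurable_translation)
    have "sym_diff A (circ_translate t A) \<subseteq> W"
      unfolding W_def using \<eta> t
      by (intro sym_diff_circ_translate_subset[OF A(2) E_def]) (auto simp: subset_iff)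
    moreover have S: "sym_diff A (circ_translate t A) \<in> sets lborel"
      using A(1) by auto
    ultimately have "measure lebesgue (sym_diff A (circ_translate t A)) \<le> measure lebesgue W"
      using W by (intro measure_mono_fmeasurable) auto
    then have "translate_defect A t \<le> measure lebesgue W"
      unfolding translate_defect_def measure_completion[OF S] .
    also have "\<dots> \<le> 2 * measure lebesgue (E - K) + 2 * measure lebesgue (V - E)"
      unfolding W_def using K(3) V(3) by (rule measure_Un_translates_le)
    finally show "translate_defect A t \<le> e"
      using K(4) V(4) by linarith
  qed
qed

lemma translate_defect_eq_0_if_irrational:
  assumes A: "A \<in> sets borel" "A \<subseteq> {0..<1}" and \<alpha>: "\<alpha> \<notin> \<rat>" "translate_defect A \<alpha> = 0"
  shows "translate_defect A c = 0"
proof -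
  have "translate_defect A c \<le> e" if "e > 0" for e
  proof -
    obtain \<delta> where "\<delta> > 0" and \<delta>: "\<And>t. \<bar>t\<bar> < \<delta> \<Longrightarrow> translate_defect A t \<le> e"
      using translate_defect_small[OF A \<open>e > 0\<close>] by blast
    obtain h k where "k > 0" and hk: "\<bar>of_int k * \<alpha> - of_int h - c\<bar> < \<delta>"
      using sequence_of_fractional_parts_is_dense[OF \<alpha>(1) \<open>\<delta> > 0\<close>] by blast
    define t where "t = c - of_int k * \<alpha> + of_int h"
    have "c = real (nat k) * \<alpha> + t + of_int (- h)"
      using \<open>k > 0\<close> by (simp add: t_def)
    then have "translate_defect A c = translate_defect A (real (nat k) * \<alpha> + t)"
      by (metis translate_defect_def circ_translate_add_of_int)
    also have "\<dots> \<le> translate_defect A (real (nat k) * \<alpha>) + translate_defect A t"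
      by (rule translate_defect_add_le[OF A])
    also have "\<dots> \<le> e"
      using translate_defect_of_nat_mult[OF A \<alpha>(2)] \<delta>[of t] hk by (simp add: t_def)
    finally show ?thesis .
  qed
  then show ?thesis
    using field_le_epsilon[of "translate_defect A c" 0] by (simp add: translate_defect_def measure_le_0_iff)
qed

lemma emeasure_Int_circ_translate:
  assumes A: "A \<in> sets borel" "A \<subseteq> {0..<1}" and "translate_defect A c = 0"
  shows "emeasure lborel (A \<inter> circ_translate c A) = emeasure lborel A"
proof -
  have "sym_diff A (circ_translate c A) \<subseteq> {0..<1}"
    using A(2) circ_translate_subset by blast
  then have "emeasure lborel (sym_diff A (circ_translate c A)) = 0"
    using assms(3) emeasure_eq_ennreal_measure[OF emeasure_subset_unit_interval_finite]
    by (simp add: translate_defect_def)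
  then have "sym_diff A (circ_translate c A) \<in> null_sets lborel"
    using A(1) by (auto simp: null_sets_def)
  then have "A - circ_translate c A \<in> null_sets lborel"
    by (rule null_sets_subset) (use A(1) in auto)
  then have "emeasure lborel (A - (A - circ_translate c A)) = emeasure lborel A"
    using A(1) by (intro emeasure_Diff_null_set) auto
  then show ?thesis
    by (simp add: Diff_Diff_Int)
qed

lemma emeasure_eq_square_if_circ_translation_invariant:
  assumes A: "A \<in> sets borel" "A \<subseteq> {0..<1}"
    and inv: "\<And>c. emeasure lborel (A \<inter> circ_translate c A) = emeasure lborel A"
  shows "emeasure lborel A * emeasure lborel A = emeasure lborel A"
proof -
  txt \<open>Integrate the indicator of y \<in> A, y + c \<in> A over y \<in> T and c \<in> T in both orders.\<close>
  define f :: "real \<Rightarrow> real \<Rightarrow> ennreal" where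
    "f y c = indicator A y * indicator {0..<1} c * indicator A (frac (y + c))" for y c
  have "case_prod f \<in> borel_measurable (lborel \<Otimes>\<^sub>M lborel)"
    unfolding f_def using A by measurable
  then have "(\<integral>\<^sup>+ c. (\<integral>\<^sup>+ y. f y c \<partial>lborel) \<partial>lborel) = (\<integral>\<^sup>+ y. (\<integral>\<^sup>+ c. f y c \<partial>lborel) \<partial>lborel)"
    by (rule lborel_pair.Fubini')
  also have "(\<integral>\<^sup>+ c. (\<integral>\<^sup>+ y. f y c \<partial>lborel) \<partial>lborel) = emeasure lborel A"
  proof -
    have "f y c = indicator {0..<1} c * indicator (A \<inter> circ_translate (- c) A) y" for y c
      using A(2) by (auto simp: f_def circ_translate_def indicator_def)
    then show ?thesis
      using A by (simp add: inv nn_integral_cmult_indicator nn_integral_multc)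
  qed
  also have "(\<integral>\<^sup>+ y. (\<integral>\<^sup>+ c. f y c \<partial>lborel) \<partial>lborel) = emeasure lborel A * emeasure lborel A"
  proof -
    have "f y c = indicator A y * indicator (circ_translate (- y) A) c" for y c
      by (auto simp: f_def circ_translate_def indicator_def add.commute)
    then show ?thesis
      using A by (simp add: emeasure_circ_translate nn_integral_cmult_indicator nn_integral_multc)
  qed
  finally show ?thesis ..
qed

lemma circ_translate_irrational_ergodic:
  assumes A: "A \<in> sets borel" "A \<subseteq> {0..<1}" and \<alpha>: "\<alpha> \<notin> \<rat>" "translate_defect A \<alpha> = 0"
  shows "measure lborel A = 0 \<or> measure lborel A = 1"
proof -
  have "emeasure lborel A * emeasure lborel A = emeasure lborel A"
    using A translate_defect_eq_0_if_irrational[OF A \<alpha>]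
    by (intro emeasure_eq_square_if_circ_translation_invariant emeasure_Int_circ_translate) auto
  then have "measure lborel A * measure lborel A = measure lborel A"
    using emeasure_eq_ennreal_measure[OF emeasure_subset_unit_interval_finite[OF A(2)]]
    by (simp add: ennreal_mult[symmetric])
  then show ?thesis
    by (metis mult_cancel_right2)
qed

lemma circ_avoiding_translates_disjoint:
  assumes "circ_avoiding D A" "frac (b - a) \<in> D"
  shows "circ_translate a A \<inter> circ_translate b A = {}"
proof (rule ccontr)
  assume "circ_translate a A \<inter> circ_translate b A \<noteq> {}"
  then obtain y where y: "frac (y - a) \<in> A" "frac (y - b) \<in> A"
    by (auto simp: circ_translate_def)
  have "frac (b - a) = frac (frac (y - a) - frac (y - b))"
    by (simp add: frac_frac_diff_left frac_diff_simp)
  then have "frac (b - a) \<in> circ_diff_set A"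
    unfolding circ_diff_set_def using y by blast
  with assms show False
    by (auto simp: circ_avoiding_def)
qed

lemma progression_translates_disjoint:
  assumes "circ_avoiding {frac (real k * x) | k. 1 \<le> k \<and> k \<le> N} A" "i < j" "j \<le> i + N"
  shows "circ_translate (real i * x) A \<inter> circ_translate (real j * x) A = {}"
proof (rule circ_avoiding_translates_disjoint[OF assms(1)])
  show "frac (real j * x - real i * x) \<in> {frac (real k * x) | k. 1 \<le> k \<and> k \<le> N}"
    using assms(2,3) by (intro CollectI exI[of _ "j - i"] conjI) (simp_all add: of_nat_diff left_diff_distrib)
qed

lemma measure_progression_translates:
  assumes av: "circ_avoiding {frac (real k * x) | k. 1 \<le> k \<and> k \<le> N} A"
  shows "measure lborel (\<Union>j\<le>N. circ_translate (real j * x) A) = (real N + 1) * measure lborel A"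
proof -
  have A: "A \<in> sets borel" "A \<subseteq> {0..<1}"
    using av by (auto simp: circ_avoiding_def)
  have "disjoint_family_on (\<lambda>j. circ_translate (real j * x) A) {..N}"
    unfolding disjoint_family_on_def
    by (metis atMost_iff inf_commute le_add2 le_trans linorder_neqE_nat progression_translates_disjoint[OF av])
  then have "measure lborel (\<Union>j\<le>N. circ_translate (real j * x) A) =
      (\<Sum>j\<le>N. measure lborel (circ_translate (real j * x) A))"
    using A emeasure_subset_unit_interval_finite[OF circ_translate_subset]
    by (intro measure_finite_Union) auto
  also have "\<dots> = (real N + 1) * measure lborel A"
    using A by (simp add: measure_circ_translate)
  finally show ?thesis .
qed

lemma circ_avoiding_measure_le:
  assumes "circ_avoiding {frac (real k * x) | k. 1 \<le> k \<and> k \<le> N} A"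
  shows "measure lborel A \<le> 1 / (real N + 1)"
proof -
  have "A \<in> sets borel"
    using assms by (simp add: circ_avoiding_def)
  then have "(real N + 1) * measure lborel A \<le> 1"
    unfolding measure_progression_translates[OF assms, symmetric]
    by (intro measure_subset_unit_interval_le_1) (auto intro: circ_translate_subset[THEN subsetD])
  then show ?thesis
    by (simp add: field_simps)
qed

lemma extremal_circ_avoiding_translate_defect:
  assumes av: "circ_avoiding {frac (real k * x) | k. 1 \<le> k \<and> k \<le> N} A"
    and mA: "measure lborel A = 1 / (real N + 1)"
  shows "translate_defect A (real (N + 1) * x) = 0"
proof -
  define R where "R = circ_translate (real (N + 1) * x) A"
  have A: "A \<in> sets borel" "A \<subseteq> {0..<1}"
    using av by (auto simp: circ_avoiding_def)
  define U where "U = (\<Union>j\<le>N. circ_translate (real j * x) A)"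
  have U: "U \<in> sets borel" "U \<subseteq> {0..<1}"
    using A by (auto simp: U_def intro: circ_translate_subset[THEN subsetD])
  have "measure lborel U = 1"
    using measure_progression_translates[OF av] mA by (simp add: U_def)
  then have "measure lborel ({0..<1} - U) = 0"
    using U emeasure_subset_unit_interval_finite[of "{0..<1}"] by (subst measure_Diff) auto
  moreover have "R - A \<subseteq> {0..<1} - U"
  proof
    fix y assume y: "y \<in> R - A"
    have "y \<notin> circ_translate (real j * x) A" if "j \<le> N" for j
    proof (cases "j = 0")
      case True
      then show ?thesis
        using y circ_translate_0[OF A(2)] by simp
    next
      case False
      then show ?thesis
        using y that progression_translates_disjoint[OF av, of j "N + 1"] by (auto simp: R_def)
    qed
    moreover have "y \<in> {0..<1}"
      using y circ_translate_subset unfolding R_def by blast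
    ultimately show "y \<in> {0..<1} - U"
      by (auto simp: U_def)
  qed
  ultimately have "measure lborel (R - A) = 0"
    using A U measure_mono_fmeasurable[of "R - A" "{0..<1} - U" lborel]
      fmeasurable_subset_unit_interval[of "{0..<1} - U"]
    by (auto simp: R_def measure_le_0_iff)
  then show ?thesis
    using A unfolding translate_defect_def R_def[symmetric]
    by (intro measure_sym_diff_eq_0) (auto simp: R_def circ_translate_subset measure_circ_translate)
qed

theorem mainTheorem19:
  fixes N :: nat and x :: real and D :: "real set"
  assumes "N > 0"
    and "x \<notin> \<rat>"
    and "D = {frac (real k * x) | k. 1 \<le> k \<and> k \<le> N}"
  shows "Md_T D \<le> 1 / (real N + 1) \<and>
         \<not> (\<exists>A. circ_avoiding D A \<and> measure lborel A = 1 / (real N + 1))"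
proof
  have "circ_avoiding D {}"
    by (auto simp: circ_avoiding_def circ_diff_set_def)
  then show "Md_T D \<le> 1 / (real N + 1)"
    unfolding Md_T_def using circ_avoiding_measure_le assms(3) by (intro cSup_least) auto
next
  show "\<not> (\<exists>A. circ_avoiding D A \<and> measure lborel A = 1 / (real N + 1))"
  proof
    assume "\<exists>A. circ_avoiding D A \<and> measure lborel A = 1 / (real N + 1)"
    then obtain A where av: "circ_avoiding D A" and mA: "measure lborel A = 1 / (real N + 1)"
      by blast
    have "real (N + 1) * x \<notin> \<rat>"
      using assms(2) Rats_divide[of "real (N + 1) * x" "real (N + 1)"] by auto
    moreover have "translate_defect A (real (N + 1) * x) = 0"
      using extremal_circ_avoiding_translate_defect av mA assms(3) by blast
    ultimately have "measure lborel A = 0 \<or> measure lborel A = 1"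
      using av by (intro circ_translate_irrational_ergodic) (auto simp: circ_avoiding_def)
    then show False
      using mA \<open>N > 0\<close> by auto
  qed
qed

end
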